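(* Let $A, B, C, X$ be spaces and let $f \colon A \times B \times C \to X$ be a map. Suppose that $f$ factors, up to homotopy, through each of the two projections $A\times B\times C \to A \times C$ and $A \times B \times C \to B \times C$. Then $f$ factors, up to homotopy, through the projection $A \times B \times C \to C$. *)

theory Defs
  imports "HOL-Analysis.Analysis"
begin

definition htpy_factors_through ::
  "'z topology \<Rightarrow> 'y topology \<Rightarrow> 'x topology \<Rightarrow> ('z \<Rightarrow> 'y) \<Rightarrow> ('z \<Rightarrow> 'x) \<Rightarrow> bool" where
  "htpy_factors_through Z Y X p f \<longleftrightarrow>
     (\<exists>g. continuous_map Y X g \<and> homotopic_with (\<lambda>h. True) Z X f (g \<circ> p))"

end

theory Submission
  imports Defs
begin

(* If g o pr_AC and h o pr_BC are homotopic, restricting both to the slice A x {b0} x C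
   shows that g is homotopic to h(b0, -) o snd; so g, and hence f ~ g o pr_AC, factors
   through C. If B is empty, the source is empty and f factors through anything. *)

lemma htpy_factors_through_empty:
  assumes "topspace Z = {}" and "topspace X \<noteq> {}"
  shows "htpy_factors_through Z Y X p f"
proof -
  obtain x0 where x0: "x0 \<in> topspace X"
    using assms(2) by blast
  have "homotopic_with (\<lambda>h. True) Z X f ((\<lambda>_. x0) \<circ> p)"
    by (rule homotopic_with_equal) (auto simp: continuous_map_def assms(1))
  then show ?thesis
    unfolding htpy_factors_through_def using x0 by (intro exI[of _ "\<lambda>_. x0"]) auto
qed

lemma htpy_factors_through_compose:
  assumes "homotopic_with (\<lambda>h. True) Z X f (g \<circ> p)" and "continuous_map Z Y p"
    and "htpy_factors_through Y W X q g"
  shows "htpy_factors_through Z W X (q \<circ> p) f"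
proof -
  obtain k where k: "continuous_map W X k" and gk: "homotopic_with (\<lambda>h. True) Y X g (k \<circ> q)"
    using assms(3) unfolding htpy_factors_through_def by blast
  have "homotopic_with (\<lambda>h. True) Z X (g \<circ> p) (k \<circ> (q \<circ> p))"
    using homotopic_with_compose_continuous_map_right[OF gk assms(2)] by (simp add: o_assoc)
  then show ?thesis
    unfolding htpy_factors_through_def using k assms(1) homotopic_with_trans by blast
qed

lemma homotopic_with_compose_section:
  assumes "homotopic_with (\<lambda>h. True) Z X (g \<circ> p) k" and "continuous_map Y Z s"
    and "\<And>y. y \<in> topspace Y \<Longrightarrow> p (s y) = y"
  shows "homotopic_with (\<lambda>h. True) Y X g (k \<circ> s)"
proof -
  have "homotopic_with (\<lambda>h. True) Y X (g \<circ> p \<circ> s) (k \<circ> s)"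
    by (rule homotopic_with_compose_continuous_map_right[OF assms(1,2)]) auto
  then show ?thesis
    by (rule homotopic_with_eq) (auto simp: assms(3))
qed

lemma continuous_map_forget_middle:
  "continuous_map (prod_topology A (prod_topology B C)) (prod_topology A C) (\<lambda>(a, b, c). (a, c))"
  using continuous_map_compose[OF continuous_map_snd continuous_map_snd]
  by (simp add: continuous_map_pairwise case_prod_unfold o_def continuous_map_fst)

lemma continuous_map_insert_middle:
  assumes "b0 \<in> topspace B"
  shows "continuous_map (prod_topology A C) (prod_topology A (prod_topology B C)) (\<lambda>(a, c). (a, b0, c))"
  using assms by (simp add: continuous_map_pairwise case_prod_unfold o_def continuous_map_fst
      continuous_map_snd)

lemma htpy_factors_through_snd_of_homotopic:
  assumes h: "continuous_map (prod_topology B C) X h"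
    and gh: "homotopic_with (\<lambda>h. True) (prod_topology A (prod_topology B C)) X
               (g \<circ> (\<lambda>(a, b, c). (a, c))) (h \<circ> (\<lambda>(a, b, c). (b, c)))"
    and b0: "b0 \<in> topspace B"
  shows "htpy_factors_through (prod_topology A C) C X snd g"
proof -
  have "homotopic_with (\<lambda>h. True) (prod_topology A C) X g
          (h \<circ> (\<lambda>(a, b, c). (b, c)) \<circ> (\<lambda>(a, c). (a, b0, c)))"
    by (rule homotopic_with_compose_section[OF gh continuous_map_insert_middle[OF b0]]) auto
  moreover have "h \<circ> (\<lambda>(a, b, c). (b, c)) \<circ> (\<lambda>(a, c). (a, b0, c)) = (\<lambda>c. h (b0, c)) \<circ> snd"
    by auto
  moreover have "continuous_map C X (\<lambda>c. h (b0, c))"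
    using continuous_map_compose[OF _ h, of C "Pair b0"] b0
    by (simp add: continuous_map_pairwise o_def)
  ultimately show ?thesis
    unfolding htpy_factors_through_def by metis
qed

theorem lemma2p4:
  fixes A :: "'a topology" and B :: "'b topology" and C :: "'c topology"
    and X :: "'x topology" and f :: "'a \<times> 'b \<times> 'c \<Rightarrow> 'x"
  assumes "continuous_map (prod_topology A (prod_topology B C)) X f"
    and "htpy_factors_through (prod_topology A (prod_topology B C)) (prod_topology A C) X
           (\<lambda>(a, b, c). (a, c)) f"
    and "htpy_factors_through (prod_topology A (prod_topology B C)) (prod_topology B C) X
           (\<lambda>(a, b, c). (b, c)) f"
    and "topspace X \<noteq> {}"
  shows "htpy_factors_through (prod_topology A (prod_topology B C)) C X
           (\<lambda>(a, b, c). c) f"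
proof (cases "topspace B = {}")
  case True
  then show ?thesis
    by (intro htpy_factors_through_empty assms(4)) simp
next
  case False
  then obtain b0 where b0: "b0 \<in> topspace B"
    by blast
  obtain g where fg: "homotopic_with (\<lambda>h. True) (prod_topology A (prod_topology B C)) X
                        f (g \<circ> (\<lambda>(a, b, c). (a, c)))"
    using assms(2) unfolding htpy_factors_through_def by blast
  obtain h where h: "continuous_map (prod_topology B C) X h"
    and fh: "homotopic_with (\<lambda>h. True) (prod_topology A (prod_topology B C)) X
               f (h \<circ> (\<lambda>(a, b, c). (b, c)))"
    using assms(3) unfolding htpy_factors_through_def by blast
  have "htpy_factors_through (prod_topology A C) C X snd g"
    using htpy_factors_through_snd_of_homotopic[OF h _ b0] fg fh
      homotopic_with_sym homotopic_with_trans by blast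
  then have "htpy_factors_through (prod_topology A (prod_topology B C)) C X
               (snd \<circ> (\<lambda>(a, b, c). (a, c))) f"
    by (rule htpy_factors_through_compose[OF fg continuous_map_forget_middle])
  moreover have "snd \<circ> (\<lambda>(a, b, c). (a, c)) = (\<lambda>(a, b, c). c)"
    by auto
  ultimately show ?thesis
    by metis
qed

end
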